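(* Let $P$ be a finite poset and $k\in\mathbb{N}$, and let $\mathcal{A}_k(P)$ be the set of antichains of $P$ of cardinality $k$. For $A,B\in\mathcal{A}_k(P)$ write $A\prec_k B$ if $A\setminus B=\{a\}$ and $B\setminus A=\{b\}$ are singletons with $a<_P b$, and let $\le_k$ be the reflexive transitive closure of $\prec_k$. Also let $\le_J$ be the relation on antichains given by $A\le_J B$ iff for every $a\in A$ there is $b\in B$ with $a\le_P b$. Then: (i) $\le_k$ is a partial order on $\mathcal{A}_k(P)$; (ii) the restriction of $\le_J$ to $\mathcal{A}_k(P)$ refines $\le_k$, i.e. $A\le_k B$ implies $A\le_J B$; (iii) if $A\le_k B$, then the elements of $A$ and $B$ can be labelled $A=\{a_1,\dots,a_k\}$, $B=\{b_1,\dots,b_k\}$ so that $a_i\le_P b_i$ for all $1\le i\le k$; (iv) $B$ covers $A$ in $(\mathcal{A}_k(P),\le_k)$ if and only if $A\prec_k B$ and the unique elements $a\in A\setminus B$ and $b\in B\setminus A$ satisfy $a\lessdot_P b$ (i.e. $b$ covers $a$ in $P$).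
   Context: An antichain is a set of pairwise incomparable elements. The relation $\le_J$ is the order on antichains induced from inclusion of the order ideals they generate. *)

theory Defs
  imports Main
begin

text \<open>The finite poset is a finite set P of elements of a type with a partial
order; the order of the poset is the restriction of that order to P.\<close>

definition is_antichain :: "'a::order set \<Rightarrow> 'a set \<Rightarrow> bool" where
  "is_antichain P A \<longleftrightarrow> A \<subseteq> P \<and> (\<forall>x\<in>A. \<forall>y\<in>A. x \<le> y \<longrightarrow> x = y)"

definition antichains_k :: "'a::order set \<Rightarrow> nat \<Rightarrow> 'a set set" where
  "antichains_k P k = {A. is_antichain P A \<and> card A = k}"

definition prec_k :: "'a::order set \<Rightarrow> nat \<Rightarrow> 'a set \<Rightarrow> 'a set \<Rightarrow> bool" where
  "prec_k P k A B \<longleftrightarrow> A \<in> antichains_k P k \<and> B \<in> antichains_k P k \<and>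
     (\<exists>a b. A - B = {a} \<and> B - A = {b} \<and> a < b)"

definition le_k :: "'a::order set \<Rightarrow> nat \<Rightarrow> 'a set rel" where
  "le_k P k = {(A, B). A \<in> antichains_k P k \<and> B \<in> antichains_k P k \<and> (prec_k P k)\<^sup>*\<^sup>* A B}"

definition le_J :: "'a::order set \<Rightarrow> 'a set \<Rightarrow> bool" where
  "le_J A B \<longleftrightarrow> (\<forall>a\<in>A. \<exists>b\<in>B. a \<le> b)"

definition covers_in :: "'a::order set \<Rightarrow> 'a \<Rightarrow> 'a \<Rightarrow> bool" where
  "covers_in P a b \<longleftrightarrow> a \<in> P \<and> b \<in> P \<and> a < b \<and> \<not> (\<exists>c\<in>P. a < c \<and> c < b)"

definition covers_k :: "'a::order set \<Rightarrow> nat \<Rightarrow> 'a set \<Rightarrow> 'a set \<Rightarrow> bool" where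
  "covers_k P k A B \<longleftrightarrow> (A, B) \<in> le_k P k \<and> A \<noteq> B \<and>
     \<not> (\<exists>C\<in>antichains_k P k. (A, C) \<in> le_k P k \<and> (C, B) \<in> le_k P k \<and> C \<noteq> A \<and> C \<noteq> B)"

end

theory Submission
  imports Defs
begin

text \<open>A step \<open>A \<prec>\<^sub>k B\<close> replaces one element of \<open>A\<close> by a larger one, so composing
the replacements along a chain yields a bijection \<open>f : A \<rightarrow> B\<close> with \<open>x \<le> f x\<close>.
Such a dominating map into an antichain fixes every element the two sets have in
common; this gives antisymmetry, while the comparison \<open>\<le>\<^sub>J\<close> and the labelling are
immediate. For covers: an element \<open>d\<close> strictly between \<open>a\<close> and \<open>b\<close> yields the
intermediate antichain \<open>(A - {a}) \<union> {d}\<close>; conversely, any antichain between \<open>A\<close> and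
\<open>B\<close> is \<open>A - {a}\<close> plus one element lying between \<open>a\<close> and \<open>b\<close>.\<close>

lemma prec_kE:
  assumes "prec_k P k A B"
  obtains a b where "A \<in> antichains_k P k" "B \<in> antichains_k P k"
    "A - B = {a}" "B - A = {b}" "a < b"
  using assms unfolding prec_k_def by blast

lemma le_k_if_prec_k: "prec_k P k A B \<Longrightarrow> (A, B) \<in> le_k P k"
  unfolding le_k_def by (auto elim: prec_kE)

lemma antichains_k_antichain: "A \<in> antichains_k P k \<Longrightarrow> is_antichain P A"
  unfolding antichains_k_def by simp

lemma antichain_eqI: "is_antichain P A \<Longrightarrow> x \<in> A \<Longrightarrow> y \<in> A \<Longrightarrow> x \<le> y \<Longrightarrow> x = y"
  unfolding is_antichain_def by blast

lemma single_exchange_eq: "A - B = {a} \<Longrightarrow> B - A = {b} \<Longrightarrow> B = insert b (A - {a})"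
  by blast

lemma bij_betw_exchange:
  assumes "a \<in> A" "b \<notin> A - {a}"
  shows "bij_betw (id(a := b)) A (insert b (A - {a}))"
  using assms unfolding bij_betw_def inj_on_def by auto

lemma rtranclp_prec_k_dominating_bij:
  "(prec_k P k)\<^sup>*\<^sup>* A B \<Longrightarrow> \<exists>f. bij_betw f A B \<and> (\<forall>x\<in>A. x \<le> f x)"
proof (induction rule: rtranclp_induct)
  case base
  show ?case using bij_betw_id by fastforce
next
  case (step B C)
  obtain f where f: "bij_betw f A B" "\<forall>x\<in>A. x \<le> f x"
    using step.IH by blast
  obtain b c where bc: "B - C = {b}" "C - B = {c}" "b < c"
    using step.hyps(2) by (rule prec_kE)
  have "bij_betw (id(b := c)) B C"
    using bij_betw_exchange[of b B c] single_exchange_eq[OF bc(1,2)] bc by auto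
  moreover have "\<forall>x\<in>A. x \<le> (id(b := c) \<circ> f) x"
    using f(2) bc(3) by (auto intro: order_trans less_imp_le)
  ultimately show ?case using bij_betw_trans[OF f(1)] by blast
qed

lemma le_k_dominating_bij:
  "(A, B) \<in> le_k P k \<Longrightarrow> \<exists>f. bij_betw f A B \<and> (\<forall>x\<in>A. x \<le> f x)"
  unfolding le_k_def using rtranclp_prec_k_dominating_bij by blast

lemma dominating_bij_comp_fixes_common:
  assumes "is_antichain P B" "bij_betw f A C" "bij_betw g C B"
    and "\<forall>x\<in>A. x \<le> f x" "\<forall>y\<in>C. y \<le> g y" "x \<in> A" "x \<in> B"
  shows "f x = x" "g (f x) = x"
proof -
  have fx: "f x \<in> C" and gfx: "g (f x) \<in> B"
    using assms(2,3,6) by (auto dest: bij_betwE)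
  have le: "x \<le> f x" "f x \<le> g (f x)"
    using assms(4,5,6) fx by auto
  then show gf: "g (f x) = x"
    using antichain_eqI[OF assms(1) assms(7) gfx] by (metis order_trans)
  show "f x = x"
    using le gf by (metis order_antisym)
qed

lemma antisym_le_k: "antisym (le_k P k)"
proof (rule antisymI)
  fix A B assume AB: "(A, B) \<in> le_k P k" and BA: "(B, A) \<in> le_k P k"
  obtain f where f: "bij_betw f A B" "\<forall>x\<in>A. x \<le> f x"
    using le_k_dominating_bij[OF AB] by blast
  obtain g where g: "bij_betw g B A" "\<forall>y\<in>B. y \<le> g y"
    using le_k_dominating_bij[OF BA] by blast
  have "is_antichain P A"
    using AB unfolding le_k_def by (auto intro: antichains_k_antichain)
  then have "f x = x" if "x \<in> A" for x
    using dominating_bij_comp_fixes_common(1)[OF _ f(1) g(1) f(2) g(2) that that] by blast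
  then have "f ` A = A" by simp
  then show "A = B"
    using f(1) unfolding bij_betw_def by simp
qed

lemma partial_order_on_le_k: "partial_order_on (antichains_k P k) (le_k P k)"
  unfolding partial_order_on_def preorder_on_def
proof (intro conjI antisym_le_k)
  show "le_k P k \<subseteq> antichains_k P k \<times> antichains_k P k"
    unfolding le_k_def by auto
  show "refl_on (antichains_k P k) (le_k P k)"
    unfolding le_k_def refl_on_def by auto
  show "trans (le_k P k)"
    unfolding le_k_def trans_def by auto
qed

lemma le_k_imp_le_J:
  assumes "(A, B) \<in> le_k P k"
  shows "le_J A B"
proof -
  obtain f where "bij_betw f A B" "\<forall>x\<in>A. x \<le> f x"
    using le_k_dominating_bij[OF assms] by blast
  then show ?thesis
    unfolding le_J_def by (auto dest: bij_betwE)
qed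

lemma le_k_labelling:
  assumes "finite P" "(A, B) \<in> le_k P k"
  shows "\<exists>a b :: nat \<Rightarrow> 'a::order. bij_betw a {1..k} A \<and> bij_betw b {1..k} B \<and>
           (\<forall>i\<in>{1..k}. a i \<le> b i)"
proof -
  obtain f where f: "bij_betw f A B" "\<forall>x\<in>A. x \<le> f x"
    using le_k_dominating_bij[OF assms(2)] by blast
  have "A \<subseteq> P" "card A = k"
    using assms(2) unfolding le_k_def antichains_k_def is_antichain_def by auto
  then have "finite A" "card A = k"
    using assms(1) finite_subset by auto
  then obtain a where a: "bij_betw a {1..k} A"
    using ex_bij_betw_nat_finite_1 by blast
  moreover have "bij_betw (f \<circ> a) {1..k} B"
    using a f(1) by (rule bij_betw_trans)
  moreover have "\<forall>i\<in>{1..k}. a i \<le> (f \<circ> a) i"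
    using a f(2) by (auto dest: bij_betwE)
  ultimately show ?thesis by blast
qed

lemma is_antichain_exchange:
  assumes A: "is_antichain P A" and B: "is_antichain P B"
    and ab: "A - B = {a}" "B - A = {b}" and d: "d \<in> P" "a \<le> d" "d \<le> b"
  shows "is_antichain P (insert d (A - {a}))"
proof -
  have below: "\<not> x \<le> d" if x: "x \<in> A - {a}" for x
  proof
    assume "x \<le> d"
    then have "x \<le> b" using d(3) by (rule order_trans)
    moreover have "x \<in> B" "b \<in> B" "b \<notin> A" using x ab by auto
    ultimately show False using antichain_eqI[OF B] x by blast
  qed
  have above: "\<not> d \<le> x" if x: "x \<in> A - {a}" for x
  proof
    assume "d \<le> x"
    then have "a \<le> x" using d(2) by (rule order_trans[rotated])
    moreover have "a \<in> A" using ab by auto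
    ultimately show False using antichain_eqI[OF A] x by blast
  qed
  show ?thesis
    unfolding is_antichain_def
  proof (intro conjI ballI impI)
    show "insert d (A - {a}) \<subseteq> P"
      using A d(1) unfolding is_antichain_def by auto
    fix x y
    assume "x \<in> insert d (A - {a})" "y \<in> insert d (A - {a})" "x \<le> y"
    then show "x = y"
      using below above antichain_eqI[OF A] by blast
  qed
qed

lemma exchange_in_antichains_k:
  assumes A: "A \<in> antichains_k P k" and B: "B \<in> antichains_k P k"
    and ab: "A - B = {a}" "B - A = {b}" and d: "d \<in> P" "a \<le> d" "d \<le> b"
  shows "insert d (A - {a}) \<in> antichains_k P k"
proof -
  have acA: "is_antichain P A" and cardA: "card A = k"
    using A unfolding antichains_k_def by auto
  have "a \<in> A" using ab by auto
  moreover have "d \<notin> A - {a}"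
    using antichain_eqI[OF acA \<open>a \<in> A\<close> _ d(2)] by auto
  ultimately have "card (insert d (A - {a})) = k"
    using bij_betw_same_card[OF bij_betw_exchange] cardA by metis
  then show ?thesis
    using is_antichain_exchange[OF acA antichains_k_antichain[OF B] ab d]
    unfolding antichains_k_def by simp
qed

lemma covers_k_no_between:
  assumes "covers_k P k A B" "C \<in> antichains_k P k" "(A, C) \<in> le_k P k" "(C, B) \<in> le_k P k"
  shows "C = A \<or> C = B"
  using assms unfolding covers_k_def by blast

lemma covers_k_imp_prec_k:
  assumes "covers_k P k A B"
  shows "prec_k P k A B"
proof -
  have "(prec_k P k)\<^sup>*\<^sup>* A B" "A \<noteq> B" "B \<in> antichains_k P k"
    using assms unfolding covers_k_def le_k_def by auto
  then obtain C where AC: "prec_k P k A C" and CB: "(prec_k P k)\<^sup>*\<^sup>* C B"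
    by (metis converse_rtranclpE)
  then have "C \<in> antichains_k P k" "C \<noteq> A" "(C, B) \<in> le_k P k"
    using \<open>B \<in> antichains_k P k\<close> unfolding le_k_def by (auto elim!: prec_kE)
  then have "C = B"
    using covers_k_no_between[OF assms] le_k_if_prec_k[OF AC] by blast
  then show ?thesis using AC by simp
qed

lemma covers_k_imp_covers_in:
  assumes "covers_k P k A B"
  shows "covers_in P (the_elem (A - B)) (the_elem (B - A))"
proof -
  obtain a b where A: "A \<in> antichains_k P k" and B: "B \<in> antichains_k P k"
    and ab: "A - B = {a}" "B - A = {b}" "a < b"
    using covers_k_imp_prec_k[OF assms] by (rule prec_kE)
  have "a \<in> A" "b \<in> B" using ab by auto
  then have "a \<in> P" "b \<in> P"
    using A B unfolding antichains_k_def is_antichain_def by auto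
  moreover have "\<not> (a < d \<and> d < b)" if "d \<in> P" for d
  proof
    assume "a < d \<and> d < b"
    then have d: "a < d" "d < b" by simp_all
    define D where "D = insert d (A - {a})"
    have D: "D \<in> antichains_k P k"
      unfolding D_def
      using exchange_in_antichains_k[OF A B ab(1,2) \<open>d \<in> P\<close> less_imp_le less_imp_le] d .
    have "d \<noteq> a" "d \<noteq> b" "d \<notin> A - {a}"
      using d antichain_eqI[OF antichains_k_antichain[OF A] \<open>a \<in> A\<close> _ less_imp_le[OF d(1)]]
      by auto
    then have "A - D = {a}" "D - A = {d}" "D - B = {d}" "B - D = {b}"
      unfolding D_def using ab by blast+
    then have "prec_k P k A D" "prec_k P k D B" "D \<noteq> A" "D \<noteq> B"
      unfolding prec_k_def using A B D d by auto
    then show False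
      using covers_k_no_between[OF assms D] le_k_if_prec_k by blast
  qed
  ultimately show ?thesis
    unfolding covers_in_def using ab by simp
qed

lemma bij_betw_fixing_common_part:
  assumes "bij_betw h A B" "\<forall>x\<in>A \<inter> B. h x = x" "A - B = {a}" "B - A = {b}"
  shows "h a = b"
proof -
  have "a \<in> A" "h a \<in> B" using assms(1,3) by (auto dest: bij_betwE)
  moreover have "h a \<notin> A \<inter> B"
    using assms(1-3) \<open>a \<in> A\<close> unfolding bij_betw_def inj_on_def by (metis Diff_iff Int_iff insertI1)
  ultimately show ?thesis using assms(4) by blast
qed

lemma prec_k_covers_in_imp_covers_k:
  assumes prec: "prec_k P k A B"
    and cov: "covers_in P (the_elem (A - B)) (the_elem (B - A))"
  shows "covers_k P k A B"
proof -
  obtain a b where B: "B \<in> antichains_k P k" and ab: "A - B = {a}" "B - A = {b}"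
    using prec by (rule prec_kE)
  have "covers_in P a b" using cov ab by simp
  then have between: "c = a \<or> c = b" if "c \<in> P" "a \<le> c" "c \<le> b" for c
    using that unfolding covers_in_def le_less by blast
  have "a \<in> A" using ab by blast
  have "C = A \<or> C = B" if AC: "(A, C) \<in> le_k P k" and CB: "(C, B) \<in> le_k P k" for C
  proof -
    obtain f where f: "bij_betw f A C" "\<forall>x\<in>A. x \<le> f x"
      using le_k_dominating_bij[OF AC] by blast
    obtain g where g: "bij_betw g C B" "\<forall>y\<in>C. y \<le> g y"
      using le_k_dominating_bij[OF CB] by blast
    note common_fixed =
      dominating_bij_comp_fixes_common[OF antichains_k_antichain[OF B] f(1) g(1) f(2) g(2)]
    have "f ` (A - {a}) = id ` (A - {a})"
      using common_fixed(1) ab(1) by (intro image_cong) auto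
    have "C = f ` insert a (A - {a})"
      using f(1) insert_Diff[OF \<open>a \<in> A\<close>] unfolding bij_betw_def by simp
    also have "\<dots> = insert (f a) (A - {a})"
      unfolding image_insert \<open>f ` (A - {a}) = id ` (A - {a})\<close> by simp
    finally have C: "C = insert (f a) (A - {a})" .
    have "g (f a) = b"
      using bij_betw_fixing_common_part[OF bij_betw_trans[OF f(1) g(1)] _ ab] common_fixed(2)
      by simp
    moreover have "C \<subseteq> P"
      using CB antichains_k_antichain unfolding le_k_def is_antichain_def by blast
    then have "f a \<in> P" using C by blast
    ultimately have "f a = a \<or> f a = b"
      using between f(2) g(2) \<open>a \<in> A\<close> C by auto
    then show ?thesis
    proof
      assume "f a = a"
      then show ?thesis using C insert_Diff[OF \<open>a \<in> A\<close>] by simp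
    next
      assume "f a = b"
      then show ?thesis using C single_exchange_eq[OF ab] by simp
    qed
  qed
  moreover have "A \<noteq> B" using ab by blast
  ultimately show ?thesis
    unfolding covers_k_def using le_k_if_prec_k[OF prec] by blast
qed

theorem proposition2p2:
  fixes P :: "'a::order set" and k :: nat
  assumes "finite P"
  shows "partial_order_on (antichains_k P k) (le_k P k)
    \<and> (\<forall>A B. (A, B) \<in> le_k P k \<longrightarrow> le_J A B)
    \<and> (\<forall>A B. (A, B) \<in> le_k P k \<longrightarrow>
           (\<exists>a b :: nat \<Rightarrow> 'a. bij_betw a {1..k} A \<and> bij_betw b {1..k} B \<and>
             (\<forall>i\<in>{1..k}. a i \<le> b i)))
    \<and> (\<forall>A\<in>antichains_k P k. \<forall>B\<in>antichains_k P k.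
           covers_k P k A B \<longleftrightarrow>
           (prec_k P k A B \<and> covers_in P (the_elem (A - B)) (the_elem (B - A))))"
proof (intro conjI allI impI ballI)
  show "partial_order_on (antichains_k P k) (le_k P k)"
    by (rule partial_order_on_le_k)
next
  fix A B
  assume "(A, B) \<in> le_k P k"
  then show "le_J A B"
    and "\<exists>a b :: nat \<Rightarrow> 'a. bij_betw a {1..k} A \<and> bij_betw b {1..k} B \<and>
           (\<forall>i\<in>{1..k}. a i \<le> b i)"
    by (rule le_k_imp_le_J, rule le_k_labelling[OF assms])
next
  fix A B
  show "covers_k P k A B \<longleftrightarrow>
      (prec_k P k A B \<and> covers_in P (the_elem (A - B)) (the_elem (B - A)))"
    using covers_k_imp_prec_k covers_k_imp_covers_in prec_k_covers_in_imp_covers_k by blast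
qed

end
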